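(* For $K\ge 1$ define $\mathcal{R}:\mathbb{R}^K\times[0,1]\to\mathbb{R}$ by \[ \mathcal{R}(a_{1},\dots,a_{K},x)=\sum_{k=1}^{K}a_{k}\sin(2\pi kx). \] For fixed $A>0$, $K\ge1$ and any $0<\epsilon<1$, there exists an MLP network $\tilde{\mathcal{R}}:\mathbb{R}^{K+1}\to\mathbb{R}$, consisting of dense layers and $\tanh$ as activation function, with $O(K^{2}+K\log^{2}(K\epsilon^{-1}))$ weights, for which \[ |\tilde{\mathcal{R}}(a_{1},\dots,a_{K},x)-\mathcal{R}(a_{1},\dots,a_{K},x)|\leq\epsilon \] for all $a_{1},\dots,a_{K}\in[-A,A]$ and $x\in[0,1]$.
   Context: An MLP (multilayer perceptron) network is a feed-forward composition of layers, each of the form $v_j=\sigma\circ(M_j v_{j-1}+b_j)$ with a matrix $M_j$ and bias vector $b_j$ and coordinate-wise nonlinearity $\sigma$ (here $\sigma=\tanh$); in some layers the bias and/or the nonlinearity may be omitted. The "number of weights" is the total number of parameters (entries of all $M_j$ and $b_j$). *)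

theory Defs
  imports Complex_Main
begin

text \<open>A dense layer: weight matrix (list of rows), optional bias vector,
  and a flag saying whether the coordinate-wise tanh nonlinearity is applied.\<close>
datatype layer = Layer "real list list" "real list option" bool

fun eval_layer :: "layer \<Rightarrow> real list \<Rightarrow> real list" where
  "eval_layer (Layer M bo act) v =
     (let z = map (\<lambda>r. sum_list (map2 (*) r v)) M;
          z' = (case bo of None \<Rightarrow> z | Some b \<Rightarrow> map2 (+) z b)
      in if act then map tanh z' else z')"

fun wf_layer :: "nat \<Rightarrow> layer \<Rightarrow> bool" where
  "wf_layer n (Layer M bo act) =
     ((\<forall>r\<in>set M. length r = n) \<and>
      (case bo of None \<Rightarrow> True | Some b \<Rightarrow> length b = length M))"

fun out_dim :: "layer \<Rightarrow> nat" where
  "out_dim (Layer M bo act) = length M"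

fun layer_weights :: "layer \<Rightarrow> nat" where
  "layer_weights (Layer M bo act) =
     sum_list (map length M) + (case bo of None \<Rightarrow> 0 | Some b \<Rightarrow> length b)"

type_synonym mlp = "layer list"

fun wf_mlp :: "nat \<Rightarrow> mlp \<Rightarrow> nat \<Rightarrow> bool" where
  "wf_mlp n [] m = (n = m)"
| "wf_mlp n (L # Ls) m = (wf_layer n L \<and> wf_mlp (out_dim L) Ls m)"

definition eval_mlp :: "mlp \<Rightarrow> real list \<Rightarrow> real list" where
  "eval_mlp N v = fold eval_layer N v"

definition num_weights :: "mlp \<Rightarrow> nat" where
  "num_weights N = sum_list (map layer_weights N)"

definition R_fun :: "real list \<Rightarrow> real \<Rightarrow> real" where
  "R_fun a x = (\<Sum>k=1..length a. a ! (k - 1) * sin (2 * pi * real k * x))"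

end

theory Submission
  imports Defs
begin

text \<open>A tanh neuron shifted far to the left computes an exponential:
  \<open>exp (2*M) * (1 + tanh (z - M)) / 2 = exp (2*z) * exp (2*M) / (exp (2*z) + exp (2*M))\<close>
  differs from \<open>exp (2*z)\<close> by at most \<open>exp (4*z - 2*M)\<close>. Everything else is built from exponentials:
  \<open>(exp (g*a) - 1) / g \<approx> a\<close> reproduces the coefficient \<open>a\<^sub>k\<close>,
  \<open>(exp (g*(a+b)) - exp (g*a) - exp (g*b) + 1) / g\<^sup>2 \<approx> a*b\<close> multiplies, and with \<open>y = exp (h*x)\<close>
  the quantity \<open>(y - 1)/h\<close> approximates \<open>x\<close>, so the degree \<open>n\<close> Taylor polynomial of
  \<open>sin (\<tau> * (y - 1)/h)\<close> is a polynomial in \<open>y\<close> whose powers \<open>y\<^sup>t = exp (t*h*x)\<close> are again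
  shifted tanh neurons. These \<open>n\<close> neurons are shared by all \<open>K\<close> frequencies, and the Taylor remainder
  \<open>(4\<pi>K)\<^sup>n/n!\<close> is small once \<open>n = O(K + log (K/\<epsilon>))\<close>, which gives \<open>O(K\<^sup>2 + K n)\<close> weights.\<close>

definition dense_layer :: "nat \<Rightarrow> nat \<Rightarrow> (nat \<Rightarrow> nat \<Rightarrow> real) \<Rightarrow> (nat \<Rightarrow> real) \<Rightarrow> bool \<Rightarrow> layer" where
  "dense_layer n m W b act = Layer (map (\<lambda>i. map (W i) [0..<n]) [0..<m]) (Some (map b [0..<m])) act"

lemma wf_dense_layer: "wf_layer n (dense_layer n m W b act)"
  by (auto simp: dense_layer_def)

lemma out_dim_dense_layer: "out_dim (dense_layer n m W b act) = m"
  by (simp add: dense_layer_def)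

lemma layer_weights_dense_layer: "layer_weights (dense_layer n m W b act) = m * n + m"
  by (simp add: dense_layer_def comp_def sum_list_triv)

lemma sum_list_map2_upt:
  assumes "length v = n"
  shows "sum_list (map2 (*) (map f [0..<n]) v) = (\<Sum>j<n. f j * v ! j)"
proof -
  have "map2 (*) (map f [0..<n]) v = map (\<lambda>j. f j * v ! j) [0..<n]"
    using assms by (simp add: list_eq_iff_nth_eq)
  then show ?thesis
    by (simp add: sum_list_map_eq_sum_count2 atLeast0LessThan[symmetric]
        sum_set_upt_conv_sum_list_nat[symmetric])
qed

lemma eval_dense_layer:
  assumes "length v = n"
  shows "eval_layer (dense_layer n m W b act) v =
    map (\<lambda>i. (if act then tanh else id) ((\<Sum>j<n. W i j * v ! j) + b i)) [0..<m]"
  using assms by (simp add: dense_layer_def sum_list_map2_upt zip_map_map Let_def zip_same_conv_map comp_def)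

section \<open>Exponentials, identity and products from shifted tanh\<close>

definition tanh_exp :: "real \<Rightarrow> real \<Rightarrow> real" where
  "tanh_exp M z = exp (2*M) * (1 + tanh (z - M)) / 2"

lemma tanh_exp_eq: "tanh_exp M z = exp (2*z) * exp (2*M) / (exp (2*z) + exp (2*M))"
proof -
  define p q where "p = exp (2*z)" and "q = exp (2*M)"
  have pq: "p > 0" "q > 0" "p + q > 0"
    by (simp_all add: p_def q_def add_pos_pos)
  have "exp (- 2 * (z - M)) = q / p"
    by (simp add: p_def q_def exp_diff[symmetric] algebra_simps)
  then have "tanh (z - M) = (1 - q/p) / (1 + q/p)"
    unfolding tanh_real_altdef by simp
  also have "\<dots> = (p - q) / (p + q)"
    using pq by (simp add: divide_simps)
  also have "\<dots> = 2 * p / (p + q) - 1"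
    using pq by (simp add: divide_simps)
  finally have "1 + tanh (z - M) = 2 * p / (p + q)"
    by simp
  then have "tanh_exp M z = q * (2 * p / (p + q)) / 2"
    by (simp add: tanh_exp_def flip: q_def)
  also have "\<dots> = p * q / (p + q)"
    using pq by (simp add: divide_simps)
  finally show ?thesis
    by (simp add: p_def q_def)
qed

lemma tanh_exp_error: "\<bar>tanh_exp M z - exp (2*z)\<bar> \<le> exp (4*z - 2*M)"
proof -
  define p q where "p = exp (2*z)" and "q = exp (2*M)"
  have pq: "p > 0" "q > 0"
    by (simp_all add: p_def q_def)
  have "tanh_exp M z = p * q / (p + q)"
    unfolding tanh_exp_eq p_def q_def ..
  then have "exp (2*z) - tanh_exp M z = p - p * q / (p + q)"
    by (simp add: p_def)
  also have "\<dots> = p^2 / (p + q)"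
    using pq by (simp add: field_simps power2_eq_square)
  finally have "exp (2*z) - tanh_exp M z = p^2 / (p + q)" .
  moreover have "p^2 / (p + q) \<le> p^2 / q"
    using pq by (intro divide_left_mono) auto
  moreover have "p^2 / q = exp (4*z - 2*M)"
    by (simp add: p_def q_def power2_eq_square exp_diff exp_add[symmetric])
  moreover have "0 \<le> p^2 / (p + q)"
    using pq by simp
  ultimately show ?thesis
    by (simp add: abs_if)
qed

lemma tanh_exp_uniform:
  assumes "\<delta> > 0"
  shows "\<exists>M. \<forall>z\<le>Z. \<bar>tanh_exp M z - exp (2*z)\<bar> \<le> \<delta>"
proof -
  define M where "M = (4*Z - ln \<delta>) / 2"
  have "\<bar>tanh_exp M z - exp (2*z)\<bar> \<le> \<delta>" if "z \<le> Z" for z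
  proof -
      have "\<bar>tanh_exp M z - exp (2*z)\<bar> \<le> exp (4*z - 2*M)"
      by (rule tanh_exp_error)
    also have "\<dots> \<le> exp (4*Z - 2*M)"
      using that by simp
    also have "4*Z - 2*M = ln \<delta>"
      by (simp add: M_def field_simps)
    finally show ?thesis
      using assms by simp
  qed
  then show ?thesis
    by blast
qed

lemma abs_exp_minus_one_minus_le:
  fixes t :: real
  assumes "\<bar>t\<bar> \<le> 1"
  shows "\<bar>exp t - 1 - t\<bar> \<le> t^2"
proof -
  have lower: "exp t - 1 - t \<ge> 0"
    using exp_ge_add_one_self[of t] by linarith
  show ?thesis
  proof (cases "t \<ge> 0")
    case True
    then show ?thesis
      using exp_bound[of t] assms lower by simp
  next
    case False
    have "exp t = 1 / exp (-t)"
      by (simp add: exp_minus field_simps)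
    also have "\<dots> \<le> 1 / (1 - t)"
      using exp_ge_add_one_self[of "-t"] False by (intro divide_left_mono) auto
    also have "\<dots> = 1 + t + t^2 / (1 - t)"
      using False by (simp add: field_simps power2_eq_square)
    also have "t^2 / (1 - t) \<le> t^2"
      using False by (simp add: divide_le_eq mult_le_cancel_left1)
    finally show ?thesis
      using lower by simp
  qed
qed

lemma exp_difference_quotient_approx:
  fixes B \<delta> :: real
  assumes "B \<ge> 0" "\<delta> > 0"
  shows "\<exists>g>0. \<forall>u. \<bar>u\<bar> \<le> B \<longrightarrow> \<bar>(exp (g*u) - 1) / g - u\<bar> \<le> \<delta>"
proof -
  define g where "g = min (1 / (B + 1)) (\<delta> / (B + 1)^2)"
  have g: "g > 0" "g * (B + 1) \<le> 1" "g * (B + 1)^2 \<le> \<delta>"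
    using assms by (auto simp: g_def min_def field_simps)
  have "\<bar>(exp (g*u) - 1) / g - u\<bar> \<le> \<delta>" if u: "\<bar>u\<bar> \<le> B" for u
  proof -
    have "\<bar>g*u\<bar> \<le> g * (B + 1)"
      using u g(1) by (simp add: abs_mult mult_left_mono)
    then have "\<bar>exp (g*u) - 1 - g*u\<bar> \<le> (g*u)^2"
      using g(2) by (intro abs_exp_minus_one_minus_le) linarith
    moreover have "(exp (g*u) - 1) / g - u = (exp (g*u) - 1 - g*u) / g"
      using g(1) by (simp add: field_simps)
    ultimately have "\<bar>(exp (g*u) - 1) / g - u\<bar> \<le> g * u^2"
      using g(1) by (simp add: divide_le_eq power2_eq_square mult.commute mult.left_commute)
    also have "\<dots> \<le> g * (B + 1)^2"
    proof -
      have "\<bar>u\<bar>^2 \<le> (B + 1)^2"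
        using u by (intro power_mono) auto
      then show ?thesis
        using g(1) by (intro mult_left_mono) auto
    qed
    finally show ?thesis
      using g(3) by linarith
  qed
  then show ?thesis
    using g(1) by blast
qed

lemma abs_mult_sub_mult_le:
  fixes p q a b d e P Q :: real
  assumes "\<bar>p - a\<bar> \<le> d" "\<bar>q - b\<bar> \<le> e" "\<bar>a\<bar> \<le> P" "\<bar>q\<bar> \<le> Q"
  shows "\<bar>p*q - a*b\<bar> \<le> d*Q + P*e"
proof -
  have "p*q - a*b = (p - a)*q + a*(q - b)"
    by (simp add: algebra_simps)
  then have "\<bar>p*q - a*b\<bar> \<le> \<bar>p - a\<bar>*\<bar>q\<bar> + \<bar>a\<bar>*\<bar>q - b\<bar>"
    by (simp add: abs_mult[symmetric] abs_triangle_ineq)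
  also have "\<dots> \<le> d*Q + P*e"
    using assms by (intro add_mono mult_mono) auto
  finally show ?thesis .
qed

definition tanh_identity :: "real \<Rightarrow> real \<Rightarrow> real \<Rightarrow> real" where
  "tanh_identity g M a = (tanh_exp M (g*a/2) - 1) / g"

lemma tanh_identity_approx:
  fixes A \<delta> :: real
  assumes "A \<ge> 0" "\<delta> > 0"
  shows "\<exists>g M. \<forall>a. \<bar>a\<bar> \<le> A \<longrightarrow> \<bar>tanh_identity g M a - a\<bar> \<le> \<delta>"
proof -
  obtain g where g: "g > 0" and quot: "\<And>u. \<bar>u\<bar> \<le> A \<Longrightarrow> \<bar>(exp (g*u) - 1) / g - u\<bar> \<le> \<delta>/2"
    using exp_difference_quotient_approx[of A "\<delta>/2"] assms by auto
  obtain M where M: "\<And>z. z \<le> g*A/2 \<Longrightarrow> \<bar>tanh_exp M z - exp (2*z)\<bar> \<le> g*\<delta>/2"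
    using tanh_exp_uniform[of "g*\<delta>/2" "g*A/2"] g assms by auto
  have "\<bar>tanh_identity g M a - a\<bar> \<le> \<delta>" if a: "\<bar>a\<bar> \<le> A" for a
  proof -
    have "g*a/2 \<le> g*A/2"
      using a g by (simp add: abs_le_iff)
    then have "\<bar>tanh_exp M (g*a/2) - exp (g*a)\<bar> \<le> g*\<delta>/2"
      using M[of "g*a/2"] by simp
    then have "\<bar>(tanh_exp M (g*a/2) - exp (g*a)) / g\<bar> \<le> \<delta>/2"
      using g by (simp add: abs_divide pos_divide_le_eq mult.commute)
    moreover have "tanh_identity g M a - a = (tanh_exp M (g*a/2) - exp (g*a)) / g + ((exp (g*a) - 1) / g - a)"
      using g by (simp add: tanh_identity_def diff_divide_distrib)
    ultimately show ?thesis
      using quot[OF a] by linarith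
  qed
  then show ?thesis
    by blast
qed

definition tanh_product :: "real \<Rightarrow> real \<Rightarrow> real \<Rightarrow> real \<Rightarrow> real" where
  "tanh_product g M a b =
     (tanh_exp M (g*(a+b)/2) - tanh_exp M (g*a/2) - tanh_exp M (g*b/2) + 1) / g^2"

lemma tanh_product_approx:
  fixes B \<delta> :: real
  assumes "B \<ge> 0" "\<delta> > 0"
  shows "\<exists>g M. \<forall>a b. \<bar>a\<bar> \<le> B \<longrightarrow> \<bar>b\<bar> \<le> B \<longrightarrow> \<bar>tanh_product g M a b - a*b\<bar> \<le> \<delta>"
proof -
  define d where "d = min 1 (\<delta> / (2*(2*B + 1)))"
  have "d \<le> \<delta> / (2*(2*B + 1))"
    by (simp add: d_def)
  then have "d * (2*B + 1) \<le> \<delta>/2"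
    using assms by (simp add: field_simps)
  then have d: "d > 0" "d \<le> 1" "d * (B + 1) + B * d \<le> \<delta>/2"
    using assms by (auto simp: d_def algebra_simps)
  obtain g where g: "g > 0" and quot: "\<And>u. \<bar>u\<bar> \<le> B \<Longrightarrow> \<bar>(exp (g*u) - 1) / g - u\<bar> \<le> d"
    using exp_difference_quotient_approx[of B d] assms d by auto
  obtain M where M: "\<And>z. z \<le> g*B \<Longrightarrow> \<bar>tanh_exp M z - exp (2*z)\<bar> \<le> g^2*\<delta>/6"
    using tanh_exp_uniform[of "g^2*\<delta>/6" "g*B"] g assms by auto
  have "\<bar>tanh_product g M a b - a*b\<bar> \<le> \<delta>" if a: "\<bar>a\<bar> \<le> B" and b: "\<bar>b\<bar> \<le> B" for a b
  proof -
    define pa pb where "pa = (exp (g*a) - 1) / g" and "pb = (exp (g*b) - 1) / g"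
    have err: "\<bar>tanh_exp M (g*w/2) - exp (g*w)\<bar> \<le> g^2*\<delta>/6" if "w \<le> 2*B" for w
      using M[of "g*w/2"] that g by (simp add: mult_left_mono)
    have "a + b \<le> 2*B" "a \<le> 2*B" "b \<le> 2*B"
      using a b assms(1) by (auto simp: abs_le_iff)
    note errs = this[THEN err]
    have "pa * pb = (exp (g*(a+b)) - exp (g*a) - exp (g*b) + 1) / g^2"
      using g by (simp add: pa_def pb_def distrib_left exp_add power2_eq_square field_simps)
    then have "tanh_product g M a b - pa * pb =
        ((tanh_exp M (g*(a+b)/2) - exp (g*(a+b))) - (tanh_exp M (g*a/2) - exp (g*a))
          - (tanh_exp M (g*b/2) - exp (g*b))) / g^2"
      using g by (simp add: tanh_product_def field_simps)
    also have "\<bar>\<dots>\<bar> \<le> (3 * (g^2*\<delta>/6)) / g^2"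
      unfolding abs_divide abs_power2 using errs by (intro divide_right_mono) (arith, simp)
    also have "\<dots> = \<delta>/2"
      using g by simp
    finally have "\<bar>tanh_product g M a b - pa * pb\<bar> \<le> \<delta>/2" .
    moreover have "\<bar>pa * pb - a * b\<bar> \<le> d * (B + 1) + B * d"
      using quot[OF a] quot[OF b] a b d(2)
      by (intro abs_mult_sub_mult_le) (auto simp: pa_def pb_def)
    ultimately show ?thesis
      using d(3) by linarith
  qed
  then show ?thesis
    by blast
qed

section \<open>Taylor polynomials of the sine in the variable exp (h x)\<close>

lemma power_div_fact_le_exp:
  fixes T :: real
  assumes "T \<ge> 0"
  shows "T^m / fact m \<le> exp T"
proof -
  have "summable (\<lambda>n. T^n / fact n)"
    using summable_exp[of T] by (simp add: divide_inverse mult.commute)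
  then have "(\<Sum>n\<in>{m}. T^n / fact n) \<le> (\<Sum>n. T^n / fact n)"
    by (rule sum_le_suminf) (use assms in auto)
  also have "(\<Sum>n. T^n / fact n) = exp T"
    by (simp add: exp_def divide_inverse mult.commute)
  finally show ?thesis
    by simp
qed

lemma power_div_fact_le_exp_halved:
  fixes T :: real
  assumes T: "T \<ge> 0" and m: "2*T \<le> real m" and mn: "m \<le> n"
  shows "T^n / fact n \<le> exp T / 2^(n - m)"
  using mn
proof (induction n rule: dec_induct)
  case base
  then show ?case
    using power_div_fact_le_exp[OF T] by simp
next
  case (step k)
  have "T^(Suc k) / fact (Suc k) = (T^k / fact k) * (T / real (Suc k))"
    by (simp add: field_simps)
  also have "\<dots> \<le> (exp T / 2^(k - m)) * (1/2)"
  proof (intro mult_mono step.IH)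
    show "T / real (Suc k) \<le> 1/2"
      using m step.hyps(1) by (simp add: field_simps)
  qed (use T in auto)
  also have "\<dots> = exp T / 2^(Suc k - m)"
    using step.hyps(1) by (simp add: Suc_diff_le field_simps)
  finally show ?case .
qed

text \<open>Once the degree exceeds \<open>2T\<close>, every further factor \<open>T/m\<close> of \<open>T\<^sup>n/n!\<close> is at most \<open>1/2\<close>,
  so \<open>2T + 2 ln (1/\<eta>)\<close> further factors push \<open>exp T\<close> below \<open>\<eta>\<close>.\<close>

definition taylor_degree :: "real \<Rightarrow> real \<Rightarrow> nat" where
  "taylor_degree T \<eta> = nat \<lceil>2*T\<rceil> + nat \<lceil>2*T + 2 * ln (1/\<eta>)\<rceil>"

lemma power_div_fact_taylor_degree_le:
  fixes T \<eta> :: real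
  assumes T: "T \<ge> 0" and \<eta>: "\<eta> > 0"
  shows "T ^ taylor_degree T \<eta> / fact (taylor_degree T \<eta>) \<le> \<eta>"
proof -
  define m r where "m = nat \<lceil>2*T\<rceil>" and "r = nat \<lceil>2*T + 2 * ln (1/\<eta>)\<rceil>"
  have n: "taylor_degree T \<eta> = m + r"
    by (simp add: taylor_degree_def m_def r_def)
  have m: "2*T \<le> real m" and r: "2*T + 2 * ln (1/\<eta>) \<le> real r"
    unfolding m_def r_def by linarith+
  have "exp T / \<eta> = exp (T + ln (1/\<eta>))"
    using \<eta> by (simp add: exp_add)
  also have "\<dots> \<le> exp (1/2) ^ r"
    using r by (simp add: exp_of_nat_mult[symmetric] field_simps)
  also have "\<dots> \<le> 2^r"
    by (intro power_mono exp_half_le2) auto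
  finally have "exp T / 2^r \<le> \<eta>"
    using \<eta> by (simp add: field_simps)
  moreover have "T ^ taylor_degree T \<eta> / fact (taylor_degree T \<eta>) \<le> exp T / 2^r"
    using power_div_fact_le_exp_halved[OF T m, of "m + r"] by (simp add: n)
  ultimately show ?thesis
    by linarith
qed

lemma taylor_degree_le:
  fixes T \<eta> :: real
  assumes "T \<ge> 0" "0 < \<eta>" "\<eta> \<le> 1"
  shows "real (taylor_degree T \<eta>) \<le> 4*T + 2 + 2 * ln (1/\<eta>)"
proof -
  have "ln (1/\<eta>) \<ge> 0"
    using assms by simp
  then show ?thesis
    unfolding taylor_degree_def using assms(1) by linarith
qed

lemma abs_sin_diff_le: "\<bar>sin a - sin b\<bar> \<le> \<bar>a - b\<bar>" for a b :: real
proof -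
  have "\<bar>sin a - sin b\<bar> = 2 * \<bar>sin ((a - b)/2)\<bar> * \<bar>cos ((a + b)/2)\<bar>"
    by (simp add: sin_diff_sin abs_mult)
  also have "\<dots> \<le> 2 * \<bar>(a - b)/2\<bar> * 1"
    by (intro mult_mono abs_sin_x_le_abs_x) auto
  finally show ?thesis
    by simp
qed

lemma abs_sin_taylor_sub_le:
  fixes \<tau> w x e :: real
  assumes "\<tau> \<ge> 0" "\<bar>w - x\<bar> \<le> e" "\<bar>w\<bar> \<le> 2"
  shows "\<bar>(\<Sum>m<n. sin_coeff m * (\<tau>*w)^m) - sin (\<tau>*x)\<bar> \<le> (2*\<tau>)^n / fact n + \<tau> * e"
proof -
  have "\<bar>\<tau>*w\<bar> \<le> 2*\<tau>"
    using mult_left_mono[OF assms(3,1)] assms(1) by (simp add: abs_mult mult.commute)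
  then have "\<bar>\<tau>*w\<bar>^n \<le> (2*\<tau>)^n"
    by (intro power_mono) auto
  then have "\<bar>sin (\<tau>*w) - (\<Sum>m<n. sin_coeff m * (\<tau>*w)^m)\<bar> \<le> (2*\<tau>)^n / fact n"
    using Maclaurin_sin_bound[of "\<tau>*w" n] by (simp add: divide_right_mono field_simps)
  moreover have "\<bar>sin (\<tau>*w) - sin (\<tau>*x)\<bar> \<le> \<tau> * e"
    using abs_sin_diff_le[of "\<tau>*w" "\<tau>*x"] assms
    by (simp add: abs_mult right_diff_distrib[symmetric] mult_left_mono order_trans)
  ultimately show ?thesis
    by linarith
qed

text \<open>The coefficients of \<open>y \<mapsto> \<Sum>m<n. sin_coeff m * (\<tau> * (y - 1) / h)^m\<close> in powers of \<open>y\<close>: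
  for \<open>y = exp (h x)\<close> and small \<open>h\<close>, \<open>(y - 1)/h\<close> is close to \<open>x\<close>.\<close>

definition sin_poly_coeff :: "real \<Rightarrow> real \<Rightarrow> nat \<Rightarrow> nat \<Rightarrow> real" where
  "sin_poly_coeff \<tau> h n i = (\<Sum>m<n. sin_coeff m * \<tau>^m / h^m * of_nat (m choose i) * (-1)^(m - i))"

lemma sum_sin_poly_coeff:
  "(\<Sum>i\<le>n. sin_poly_coeff \<tau> h n i * y^i) = (\<Sum>m<n. sin_coeff m * (\<tau> * ((y - 1) / h))^m)"
proof -
  have "(\<Sum>i\<le>n. sin_poly_coeff \<tau> h n i * y^i) =
      (\<Sum>m<n. sin_coeff m * \<tau>^m / h^m * (\<Sum>i\<le>n. of_nat (m choose i) * y^i * (-1)^(m - i)))"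
    unfolding sin_poly_coeff_def sum_distrib_right sum_distrib_left by (subst sum.swap) (simp add: ac_simps)
  also have "\<dots> = (\<Sum>m<n. sin_coeff m * \<tau>^m / h^m * (\<Sum>i\<le>m. of_nat (m choose i) * y^i * (-1)^(m - i)))"
    by (intro sum.cong refl arg_cong[where f = "(*) _"] sum.mono_neutral_right) auto
  also have "\<dots> = (\<Sum>m<n. sin_coeff m * (\<tau> * ((y - 1) / h))^m)"
    using binomial_ring[of y "-1"] by (simp add: power_mult_distrib power_divide mult.assoc)
  finally show ?thesis .
qed

definition tanh_sine :: "nat \<Rightarrow> real \<Rightarrow> real \<Rightarrow> real \<Rightarrow> real \<Rightarrow> real" where
  "tanh_sine n h M \<tau> x = sin_poly_coeff \<tau> h n 0 +
     (\<Sum>t<n. sin_poly_coeff \<tau> h n (Suc t) * tanh_exp M (real (Suc t) * h * x / 2))"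

lemma abs_tanh_sine_sub_poly_le:
  fixes h x d M \<tau> :: real
  assumes h: "h > 0" and x: "0 \<le> x" "x \<le> 1"
    and M: "\<And>z. z \<le> real n * h / 2 \<Longrightarrow> \<bar>tanh_exp M z - exp (2*z)\<bar> \<le> d"
  shows "\<bar>tanh_sine n h M \<tau> x - (\<Sum>i\<le>n. sin_poly_coeff \<tau> h n i * exp (h*x)^i)\<bar>
    \<le> (\<Sum>i\<le>n. \<bar>sin_poly_coeff \<tau> h n i\<bar>) * d"
proof -
  let ?c = "sin_poly_coeff \<tau> h n"
  have d: "d \<ge> 0"
    using M[of 0] h by (auto intro: order_trans[OF abs_ge_zero])
  have err: "\<bar>tanh_exp M (real (Suc t) * h * x / 2) - exp (h*x)^(Suc t)\<bar> \<le> d" if "t < n" for t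
  proof -
    have "real (Suc t) * h * x \<le> real n * h * 1"
      using that h x by (intro mult_mono) auto
    moreover have "exp (h*x)^(Suc t) = exp (2 * (real (Suc t) * h * x / 2))"
      by (subst exp_of_nat_mult[symmetric]) (simp add: mult.assoc)
    ultimately show ?thesis
      using M[of "real (Suc t) * h * x / 2"] by simp
  qed
  have "tanh_sine n h M \<tau> x - (\<Sum>i\<le>n. ?c i * exp (h*x)^i) =
      (\<Sum>t<n. ?c (Suc t) * (tanh_exp M (real (Suc t) * h * x / 2) - exp (h*x)^(Suc t)))"
    by (simp add: tanh_sine_def sum.atMost_shift right_diff_distrib sum_subtractf)
  also have "\<bar>\<dots>\<bar> \<le> (\<Sum>t<n. \<bar>?c (Suc t)\<bar> * d)"
    using err by (intro order_trans[OF sum_abs] sum_mono) (auto simp: abs_mult intro: mult_left_mono)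
  also have "\<dots> \<le> (\<Sum>i\<le>n. \<bar>?c i\<bar>) * d"
    using d by (simp add: sum.atMost_shift sum_distrib_right distrib_right)
  finally show ?thesis .
qed

lemma abs_tanh_sine_sub_sin_le:
  fixes h x e d M \<tau> :: real
  assumes h: "h > 0" and x: "0 \<le> x" "x \<le> 1" and \<tau>: "0 \<le> \<tau>"
    and quot: "\<bar>(exp (h*x) - 1) / h - x\<bar> \<le> e" and e: "e \<le> 1"
    and M: "\<And>z. z \<le> real n * h / 2 \<Longrightarrow> \<bar>tanh_exp M z - exp (2*z)\<bar> \<le> d"
  shows "\<bar>tanh_sine n h M \<tau> x - sin (\<tau>*x)\<bar>
    \<le> (\<Sum>i\<le>n. \<bar>sin_poly_coeff \<tau> h n i\<bar>) * d + (2*\<tau>)^n / fact n + \<tau> * e"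
proof -
  define w where "w = (exp (h*x) - 1) / h"
  have w: "\<bar>w - x\<bar> \<le> e" "\<bar>w\<bar> \<le> 2"
    using quot x e by (auto simp: w_def)
  have "\<bar>tanh_sine n h M \<tau> x - (\<Sum>m<n. sin_coeff m * (\<tau>*w)^m)\<bar> \<le> (\<Sum>i\<le>n. \<bar>sin_poly_coeff \<tau> h n i\<bar>) * d"
    using abs_tanh_sine_sub_poly_le[OF h x M] by (simp only: sum_sin_poly_coeff w_def)
  then show ?thesis
    using abs_sin_taylor_sub_le[OF \<tau> w, of n] by linarith
qed

lemma tanh_sine_approx:
  fixes \<delta> T :: real and \<T> :: "real set"
  assumes \<delta>: "\<delta> > 0" and \<T>: "finite \<T>" "\<T> \<subseteq> {0..T}"
    and taylor: "(2*T)^n / fact n \<le> \<delta>/3"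
  shows "\<exists>h M. \<forall>\<tau>\<in>\<T>. \<forall>x. 0 \<le> x \<longrightarrow> x \<le> 1 \<longrightarrow> \<bar>tanh_sine n h M \<tau> x - sin (\<tau>*x)\<bar> \<le> \<delta>"
proof (cases "\<T> = {}")
  case False
  then have T: "T \<ge> 0"
    using \<T>(2) by auto
  define e where "e = min 1 (\<delta> / (3 * (T + 1)))"
  have e: "e > 0" "e \<le> 1" "T * e \<le> \<delta>/3"
    using \<delta> T by (auto simp: e_def min_def field_simps)
  obtain h where h: "h > 0" and quot: "\<And>u. \<bar>u\<bar> \<le> 1 \<Longrightarrow> \<bar>(exp (h*u) - 1) / h - u\<bar> \<le> e"
    using exp_difference_quotient_approx[of 1 e] e by auto
  define S where "S = 1 + (\<Sum>\<tau>\<in>\<T>. \<Sum>i\<le>n. \<bar>sin_poly_coeff \<tau> h n i\<bar>)"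
  have S: "S \<ge> 1"
    by (simp add: S_def sum_nonneg)
  obtain M where M: "\<And>z. z \<le> real n * h / 2 \<Longrightarrow> \<bar>tanh_exp M z - exp (2*z)\<bar> \<le> \<delta> / (3*S)"
    using tanh_exp_uniform[of "\<delta> / (3*S)" "real n * h / 2"] \<delta> S by auto
  have "\<bar>tanh_sine n h M \<tau> x - sin (\<tau>*x)\<bar> \<le> \<delta>" if \<tau>: "\<tau> \<in> \<T>" and x: "0 \<le> x" "x \<le> 1" for \<tau> x
  proof -
    have quot_x: "\<bar>(exp (h*x) - 1) / h - x\<bar> \<le> e"
      using quot x by simp
    have "(\<Sum>i\<le>n. \<bar>sin_poly_coeff \<tau> h n i\<bar>) \<le> (\<Sum>\<tau>\<in>\<T>. \<Sum>i\<le>n. \<bar>sin_poly_coeff \<tau> h n i\<bar>)"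
      by (rule member_le_sum) (use \<tau> \<T>(1) in \<open>auto simp: sum_nonneg\<close>)
    then have "(\<Sum>i\<le>n. \<bar>sin_poly_coeff \<tau> h n i\<bar>) \<le> S"
      by (simp add: S_def)
    then have "(\<Sum>i\<le>n. \<bar>sin_poly_coeff \<tau> h n i\<bar>) * (\<delta> / (3*S)) \<le> \<delta>/3"
      using \<delta> S by (simp add: field_simps)
    moreover have "0 \<le> \<tau>" "\<tau> \<le> T"
      using \<tau> \<T>(2) by auto
    then have "(2*\<tau>)^n / fact n + \<tau> * e \<le> (2*T)^n / fact n + T * e"
      using e by (intro add_mono mult_right_mono divide_right_mono power_mono) auto
    ultimately show ?thesis
      using abs_tanh_sine_sub_sin_le[where n = n, OF h x \<open>0 \<le> \<tau>\<close> quot_x e(2) M] taylor e(3)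
      by linarith
  qed
  then show ?thesis
    by blast
qed simp

section \<open>The network\<close>

lemma sum_lessThan_add: "(\<Sum>j<m + n. f j) = (\<Sum>j<m. f j) + (\<Sum>t<n. f (m + t))"
  for f :: "nat \<Rightarrow> 'a::comm_monoid_add"
  by (induction n) (simp_all add: ac_simps)

lemma sum_lessThan_mult_delta:
  "(\<Sum>j<N. (if j = i then c else 0) * f j) = (if i < N then c * f i else (0::'a::semiring_0))"
  for N i :: nat
  by (induction N) (auto simp: less_Suc_eq)

definition exp_layer_weights :: "nat \<Rightarrow> real \<Rightarrow> real \<Rightarrow> nat \<Rightarrow> nat \<Rightarrow> real" where
  "exp_layer_weights K g h i j =
     (if i < K then (if j = i then g/2 else 0) else if j = K then real (Suc (i - K)) * h / 2 else 0)"

definition readout_weights ::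
    "nat \<Rightarrow> nat \<Rightarrow> (nat \<Rightarrow> real) \<Rightarrow> real \<Rightarrow> real \<Rightarrow> real \<Rightarrow> real \<Rightarrow> nat \<Rightarrow> nat \<Rightarrow> real" where
  "readout_weights K n \<tau> g M1 h M i j =
     (if i < K then (if j = i then exp (2*M1) / (2*g) else 0)
      else if K \<le> j then sin_poly_coeff (\<tau> (i - K)) h n (Suc (j - K)) * exp (2*M) / 2 else 0)"

definition readout_bias ::
    "nat \<Rightarrow> nat \<Rightarrow> (nat \<Rightarrow> real) \<Rightarrow> real \<Rightarrow> real \<Rightarrow> real \<Rightarrow> real \<Rightarrow> nat \<Rightarrow> real" where
  "readout_bias K n \<tau> g M1 h M i =
     (if i < K then (exp (2*M1) / 2 - 1) / g
      else sin_poly_coeff (\<tau> (i - K)) h n 0 +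
        (\<Sum>t<n. sin_poly_coeff (\<tau> (i - K)) h n (Suc t) * exp (2*M) / 2))"

definition product_weights :: "nat \<Rightarrow> real \<Rightarrow> nat \<Rightarrow> nat \<Rightarrow> real" where
  "product_weights K g i j =
     (if i < K then (if j = i then g/2 else 0) + (if j = K + i then g/2 else 0)
      else if j = i - K then g/2 else 0)"

definition output_weights :: "nat \<Rightarrow> real \<Rightarrow> real \<Rightarrow> nat \<Rightarrow> nat \<Rightarrow> real" where
  "output_weights K g M i j = (if j < K then 1 else -1) * exp (2*M) / (2*g^2)"

text \<open>Layer 1 evaluates \<open>tanh (z - M)\<close> at \<open>z = g\<^sub>1 a\<^sub>k / 2\<close> and at \<open>z = t h x / 2\<close> for \<open>t = 1, \<dots>, n\<close>;
  the linear layer 2 turns these into \<open>tanh_identity\<close> of each \<open>a\<^sub>k\<close> and \<open>tanh_sine\<close> at each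
  frequency \<open>\<tau> k\<close>; layers 3 and 4 form the \<open>K\<close> products \<open>tanh_product\<close> and add them up.\<close>

definition sine_net ::
    "nat \<Rightarrow> nat \<Rightarrow> (nat \<Rightarrow> real) \<Rightarrow> real \<Rightarrow> real \<Rightarrow> real \<Rightarrow> real \<Rightarrow> real \<Rightarrow> real \<Rightarrow> mlp" where
  "sine_net K n \<tau> g1 M1 h M g2 M2 =
    [dense_layer (K+1) (K+n) (exp_layer_weights K g1 h) (\<lambda>i. if i < K then - M1 else - M) True,
     dense_layer (K+n) (2*K) (readout_weights K n \<tau> g1 M1 h M) (readout_bias K n \<tau> g1 M1 h M) False,
     dense_layer (2*K) (3*K) (product_weights K g2) (\<lambda>i. - M2) True,
     dense_layer (3*K) 1 (output_weights K g2 M2) (\<lambda>i. real K * (1 - exp (2*M2) / 2) / g2^2) False]"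

lemma wf_sine_net: "wf_mlp (K+1) (sine_net K n \<tau> g1 M1 h M g2 M2) 1"
  by (simp add: sine_net_def wf_dense_layer out_dim_dense_layer)

lemma num_weights_sine_net:
  assumes "1 \<le> K"
  shows "num_weights (sine_net K n \<tau> g1 M1 h M g2 M2) \<le> 20*K^2 + 5*K*n"
proof -
  have "num_weights (sine_net K n \<tau> g1 M1 h M g2 M2) = 9*K^2 + 3*K*n + 10*K + 2*n + 1"
    by (simp add: sine_net_def num_weights_def layer_weights_dense_layer algebra_simps power2_eq_square)
  also have "\<dots> \<le> 20*K^2 + 5*K*n"
  proof -
    have "K \<le> K^2" "n \<le> K*n"
      using assms by (simp_all add: power2_eq_square)
    then show ?thesis
      using assms by linarith
  qed
  finally show ?thesis .
qed

lemma eval_exp_layer: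
  assumes "length a = K"
  shows "eval_layer (dense_layer (K+1) (K+n) (exp_layer_weights K g1 h) (\<lambda>i. if i < K then - M1 else - M) True)
      (a @ [x]) =
    map (\<lambda>i. if i < K then tanh (g1 * a!i / 2 - M1) else tanh (real (Suc (i - K)) * h * x / 2 - M)) [0..<K+n]"
proof -
  have "(\<Sum>j<K+1. exp_layer_weights K g1 h i j * (a @ [x]) ! j) =
     (if i < K then g1 * a!i / 2 else real (Suc (i - K)) * h * x / 2)" for i
    using assms by (simp add: exp_layer_weights_def sum_lessThan_mult_delta nth_append)
  then show ?thesis
    using assms by (simp add: eval_dense_layer)
qed

lemma eval_readout_layer:
  fixes K n :: nat and \<tau> :: "nat \<Rightarrow> real" and a :: "real list" and x g M1 h M :: real
  defines "u \<equiv> \<lambda>i. if i < K then tanh (g * a!i / 2 - M1) else tanh (real (Suc (i - K)) * h * x / 2 - M)"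
  shows "eval_layer (dense_layer (K+n) (2*K) (readout_weights K n \<tau> g M1 h M) (readout_bias K n \<tau> g M1 h M) False)
      (map u [0..<K+n]) =
    map (\<lambda>i. if i < K then tanh_identity g M1 (a!i) else tanh_sine n h M (\<tau> (i - K)) x) [0..<2*K]"
proof -
  let ?U = "map u [0..<K+n]"
  have "(\<Sum>j<K+n. readout_weights K n \<tau> g M1 h M i j * ?U ! j) + readout_bias K n \<tau> g M1 h M i =
     (if i < K then tanh_identity g M1 (a!i) else tanh_sine n h M (\<tau> (i - K)) x)" for i
  proof (cases "i < K")
    case True
    then show ?thesis
      by (cases "g = 0") (simp_all add: readout_weights_def readout_bias_def sum_lessThan_mult_delta
          tanh_identity_def tanh_exp_def u_def field_simps)
  next
    case False
    let ?c = "sin_poly_coeff (\<tau> (i - K)) h n"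
    have "(\<Sum>j<K+n. readout_weights K n \<tau> g M1 h M i j * ?U ! j) =
        (\<Sum>t<n. ?c (Suc t) * exp (2*M) / 2 * tanh (real (Suc t) * h * x / 2 - M))"
      unfolding sum_lessThan_add using False by (simp add: readout_weights_def u_def)
    moreover have "\<dots> + (\<Sum>t<n. ?c (Suc t) * exp (2*M) / 2) =
        (\<Sum>t<n. ?c (Suc t) * tanh_exp M (real (Suc t) * h * x / 2))"
      unfolding sum.distrib[symmetric] by (intro sum.cong refl) (simp add: tanh_exp_def field_simps)
    ultimately show ?thesis
      using False by (simp add: readout_bias_def tanh_sine_def)
  qed
  then show ?thesis
    by (simp add: eval_dense_layer)
qed

lemma eval_product_layer:
  "eval_layer (dense_layer (2*K) (3*K) (product_weights K g) (\<lambda>i. - M) True)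
      (map (\<lambda>i. if i < K then p i else q (i - K)) [0..<2*K]) =
    map (\<lambda>i. if i < K then tanh (g * (p i + q i) / 2 - M)
      else if i < 2*K then tanh (g * p (i - K) / 2 - M) else tanh (g * q (i - 2*K) / 2 - M)) [0..<3*K]"
proof -
  let ?V = "map (\<lambda>i. if i < K then p i else q (i - K)) [0..<2*K]"
  have "(\<Sum>j<2*K. product_weights K g i j * ?V ! j) =
     (if i < K then g * (p i + q i) / 2 else if i < 2*K then g * p (i - K) / 2 else g * q (i - 2*K) / 2)"
    if "i < 3*K" for i
  proof (cases "i < K")
    case True
    then have "(\<Sum>j<2*K. product_weights K g i j * ?V ! j) =
        (\<Sum>j<2*K. (if j = i then g/2 else 0) * ?V ! j) + (\<Sum>j<2*K. (if j = K + i then g/2 else 0) * ?V ! j)"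
      unfolding sum.distrib[symmetric] by (intro sum.cong refl) (simp add: product_weights_def distrib_right)
    then show ?thesis
      using True by (simp add: sum_lessThan_mult_delta field_simps)
  next
    case False
    then have "(\<Sum>j<2*K. product_weights K g i j * ?V ! j) = g/2 * ?V ! (i - K)"
      using that by (simp add: product_weights_def sum_lessThan_mult_delta)
    moreover have "?V ! (i - K) = (if i < 2*K then p (i - K) else q (i - 2*K))"
    proof -
      have "i - K < 2*K" "i - K < K \<longleftrightarrow> i < 2*K" "i - K - K = i - 2*K"
        using False that by auto
      then show ?thesis
        by simp
    qed
    ultimately show ?thesis
      using False by simp
  qed
  then show ?thesis
    by (simp add: eval_dense_layer)
qed

lemma sum_lessThan_3_mult: "(\<Sum>j<3*K. f j) = (\<Sum>k<K. f k + f (K + k) + f (2*K + k))"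
  for f :: "nat \<Rightarrow> 'a::comm_monoid_add"
proof -
  have "(\<Sum>j<3*K. f j) = (\<Sum>j<K + K + K. f j)"
    by (simp add: numeral_3_eq_3 algebra_simps)
  then show ?thesis
    by (simp only: sum_lessThan_add sum.distrib mult_2 add.assoc)
qed

lemma eval_output_layer:
  "eval_layer (dense_layer (3*K) 1 (output_weights K g M) (\<lambda>i. real K * (1 - exp (2*M) / 2) / g^2) False)
      (map (\<lambda>i. if i < K then tanh (z1 i - M) else if i < 2*K then tanh (z2 (i - K) - M)
        else tanh (z3 (i - 2*K) - M)) [0..<3*K]) =
    [\<Sum>k<K. (tanh_exp M (z1 k) - tanh_exp M (z2 k) - tanh_exp M (z3 k) + 1) / g^2]"
proof -
  let ?O = "map (\<lambda>i. if i < K then tanh (z1 i - M) else if i < 2*K then tanh (z2 (i - K) - M)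
        else tanh (z3 (i - 2*K) - M)) [0..<3*K]"
  have "(\<Sum>j<3*K. output_weights K g M 0 j * ?O ! j) =
      (\<Sum>k<K. exp (2*M) / (2*g^2) * (tanh (z1 k - M) - tanh (z2 k - M) - tanh (z3 k - M)))"
    unfolding sum_lessThan_3_mult
    by (intro sum.cong refl) (simp add: output_weights_def algebra_simps diff_divide_distrib add_divide_distrib)
  then have "(\<Sum>j<3*K. output_weights K g M 0 j * ?O ! j) + real K * (1 - exp (2*M) / 2) / g^2 =
      (\<Sum>k<K. exp (2*M) / (2*g^2) * (tanh (z1 k - M) - tanh (z2 k - M) - tanh (z3 k - M))
        + (1 - exp (2*M) / 2) / g^2)"
    by (simp add: sum.distrib)
  also have "\<dots> = (\<Sum>k<K. (tanh_exp M (z1 k) - tanh_exp M (z2 k) - tanh_exp M (z3 k) + 1) / g^2)"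
    by (intro sum.cong refl) (cases "g = 0"; simp add: tanh_exp_def field_simps)
  finally show ?thesis
    by (simp add: eval_dense_layer)
qed

lemma eval_sine_net:
  assumes "length a = K"
  shows "hd (eval_mlp (sine_net K n \<tau> g1 M1 h M g2 M2) (a @ [x])) =
    (\<Sum>k<K. tanh_product g2 M2 (tanh_identity g1 M1 (a!k)) (tanh_sine n h M (\<tau> k) x))"
proof -
  have "eval_mlp (sine_net K n \<tau> g1 M1 h M g2 M2) (a @ [x]) =
    eval_layer (dense_layer (3*K) 1 (output_weights K g2 M2) (\<lambda>i. real K * (1 - exp (2*M2) / 2) / g2^2) False)
     (eval_layer (dense_layer (2*K) (3*K) (product_weights K g2) (\<lambda>i. - M2) True)
      (eval_layer (dense_layer (K+n) (2*K) (readout_weights K n \<tau> g1 M1 h M) (readout_bias K n \<tau> g1 M1 h M) False)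
       (eval_layer (dense_layer (K+1) (K+n) (exp_layer_weights K g1 h) (\<lambda>i. if i < K then - M1 else - M) True)
        (a @ [x]))))"
    by (simp add: eval_mlp_def sine_net_def)
  also note eval_exp_layer[OF assms]
  also note eval_readout_layer
  also note eval_product_layer
  also note eval_output_layer
  finally show ?thesis
    by (simp add: tanh_product_def)
qed

lemma abs_approx_product_le:
  fixes A \<delta> :: real and P :: "real \<Rightarrow> real \<Rightarrow> real"
  assumes P: "\<And>p q. \<bar>p\<bar> \<le> A + 2 \<Longrightarrow> \<bar>q\<bar> \<le> A + 2 \<Longrightarrow> \<bar>P p q - p*q\<bar> \<le> \<delta>"
    and p: "\<bar>p - a\<bar> \<le> \<delta>" and q: "\<bar>q - s\<bar> \<le> \<delta>"
    and a: "\<bar>a\<bar> \<le> A" and s: "\<bar>s\<bar> \<le> 1" and \<delta>: "\<delta> \<le> 1"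
  shows "\<bar>P p q - a*s\<bar> \<le> \<delta> * (A + 3)"
proof -
  have q2: "\<bar>q\<bar> \<le> 2"
    using q s \<delta> by linarith
  have "\<bar>P p q - p*q\<bar> \<le> \<delta>"
    using p q2 a \<delta> by (intro P) linarith+
  moreover have "\<bar>p*q - a*s\<bar> \<le> \<delta> * 2 + A * \<delta>"
    using p q a q2 by (rule abs_mult_sub_mult_le)
  ultimately show ?thesis
    by (simp add: algebra_simps)
qed

lemma sine_sum_network:
  fixes A \<delta> T :: real and \<tau> :: "nat \<Rightarrow> real"
  assumes K: "1 \<le> K" and A: "0 \<le> A" and \<delta>: "0 < \<delta>" "\<delta> \<le> 1"
    and \<tau>: "\<And>k. k < K \<Longrightarrow> 0 \<le> \<tau> k \<and> \<tau> k \<le> T" and taylor: "(2*T)^n / fact n \<le> \<delta>/3"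
  shows "\<exists>N. wf_mlp (K+1) N 1 \<and> num_weights N \<le> 20*K^2 + 5*K*n \<and>
    (\<forall>a x. length a = K \<longrightarrow> (\<forall>i<K. \<bar>a!i\<bar> \<le> A) \<longrightarrow> 0 \<le> x \<longrightarrow> x \<le> 1 \<longrightarrow>
       \<bar>hd (eval_mlp N (a @ [x])) - (\<Sum>k<K. a!k * sin (\<tau> k * x))\<bar> \<le> K * (\<delta> * (A + 3)))"
proof -
  obtain g1 M1 where ident: "\<And>a. \<bar>a\<bar> \<le> A \<Longrightarrow> \<bar>tanh_identity g1 M1 a - a\<bar> \<le> \<delta>"
    using tanh_identity_approx[OF A \<delta>(1)] by blast
  obtain h M where sine: "\<And>k x. k < K \<Longrightarrow> 0 \<le> x \<Longrightarrow> x \<le> 1 \<Longrightarrow> \<bar>tanh_sine n h M (\<tau> k) x - sin (\<tau> k * x)\<bar> \<le> \<delta>"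
    using tanh_sine_approx[of \<delta> "\<tau> ` {..<K}" T n] \<delta> \<tau> taylor by fastforce
  obtain g2 M2 where prod: "\<And>p q. \<bar>p\<bar> \<le> A + 2 \<Longrightarrow> \<bar>q\<bar> \<le> A + 2 \<Longrightarrow> \<bar>tanh_product g2 M2 p q - p*q\<bar> \<le> \<delta>"
    using tanh_product_approx[of "A + 2" \<delta>] A \<delta> by auto
  define N where "N = sine_net K n \<tau> g1 M1 h M g2 M2"
  have "\<bar>hd (eval_mlp N (a @ [x])) - (\<Sum>k<K. a!k * sin (\<tau> k * x))\<bar> \<le> K * (\<delta> * (A + 3))"
    if a: "length a = K" "\<forall>i<K. \<bar>a!i\<bar> \<le> A" and x: "0 \<le> x" "x \<le> 1" for a x
  proof -
    have "\<bar>tanh_product g2 M2 (tanh_identity g1 M1 (a!k)) (tanh_sine n h M (\<tau> k) x) - a!k * sin (\<tau> k * x)\<bar>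
        \<le> \<delta> * (A + 3)" if k: "k < K" for k
      using abs_approx_product_le[OF prod ident sine] a(2) k x abs_sin_le_one \<delta>(2) by blast
    then have "(\<Sum>k<K. \<bar>tanh_product g2 M2 (tanh_identity g1 M1 (a!k)) (tanh_sine n h M (\<tau> k) x)
        - a!k * sin (\<tau> k * x)\<bar>) \<le> K * (\<delta> * (A + 3))"
      using sum_mono[of "{..<K}" _ "\<lambda>_. \<delta> * (A + 3)"] by simp
    then show ?thesis
      unfolding N_def eval_sine_net[OF a(1)] sum_subtractf[symmetric] by (rule order_trans[OF sum_abs])
  qed
  then show ?thesis
    using wf_sine_net num_weights_sine_net[OF K] unfolding N_def by blast
qed

section \<open>Choice of the parameters\<close>

lemma quadratic_plus_log_bound:
  fixes K n :: nat and c L :: real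
  assumes K: "1 \<le> K" and c: "0 \<le> c" and n: "real n \<le> c * K + 2 * L"
  shows "real (20*K^2 + 5*K*n) \<le> (30 + 5*c) * (real K ^ 2 + real K * L^2)"
proof -
  have "2 * L \<le> 1 + L^2"
    using zero_le_power2[of "L - 1"] by (simp add: power2_diff)
  then have "L \<le> real K + L^2"
    using K zero_le_power2[of L] by linarith
  then have KL: "real K * L \<le> real K ^ 2 + real K * L^2"
    using mult_left_mono[of L "real K + L^2" "real K"] by (simp add: distrib_left power2_eq_square)
  have "real (20*K^2 + 5*K*n) = 20 * real K ^ 2 + 5 * real K * real n"
    by simp
  also have "\<dots> \<le> 20 * real K ^ 2 + 5 * real K * (c * K + 2 * L)"
    using n by (simp add: mult_left_mono)
  also have "\<dots> = (20 + 5*c) * real K ^ 2 + 10 * (real K * L)"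
    by (simp add: algebra_simps power2_eq_square)
  also have "\<dots> \<le> (20 + 5*c) * real K ^ 2 + 10 * (real K ^ 2 + real K * L^2)"
    using KL by simp
  also have "\<dots> \<le> (30 + 5*c) * (real K ^ 2 + real K * L^2)"
    using c by (simp add: algebra_simps)
  finally show ?thesis .
qed

lemma taylor_degree_sine_le:
  fixes B \<epsilon> :: real and K :: nat
  assumes K: "1 \<le> K" and B: "1 \<le> B" and \<epsilon>: "0 < \<epsilon>" "\<epsilon> < 1"
  shows "real (taylor_degree (4*pi*K) (\<epsilon> / (B*K))) \<le> (16*pi + 2 + 2 * ln B) * K + 2 * ln (K / \<epsilon>)"
proof -
  have "1 * 1 \<le> B * K"
    using K B by (intro mult_mono) auto
  then have \<eta>: "0 < \<epsilon> / (B*K)" "\<epsilon> / (B*K) \<le> 1"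
    using \<epsilon> by simp_all
  have "1 / (\<epsilon> / (B*K)) = B * (K / \<epsilon>)"
    by simp
  then have "ln (1 / (\<epsilon> / (B*K))) = ln B + ln (K / \<epsilon>)"
    using K B \<epsilon> by (simp only:) (rule ln_mult_pos; simp)
  then have "real (taylor_degree (4*pi*K) (\<epsilon> / (B*K))) \<le> 16*pi*K + (2 + 2 * ln B) + 2 * ln (K / \<epsilon>)"
    using taylor_degree_le[of "4*pi*K", OF _ \<eta>] by simp
  also have "\<dots> \<le> 16*pi*K + (2 + 2 * ln B) * K + 2 * ln (K / \<epsilon>)"
    using mult_left_mono[of 1 "real K" "2 + 2 * ln B"] K B by simp
  finally show ?thesis
    by (simp add: algebra_simps)
qed

lemma R_fun_eq_sum: "R_fun a x = (\<Sum>k<length a. a!k * sin (2*pi*real (Suc k) * x))"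
  by (simp add: R_fun_def sum.atLeast1_atMost_eq)

lemma R_fun_network:
  fixes A \<epsilon> :: real and K :: nat
  assumes K: "1 \<le> K" and A: "0 \<le> A" and \<epsilon>: "0 < \<epsilon>" "\<epsilon> < 1"
  defines "n \<equiv> taylor_degree (4*pi*K) (\<epsilon> / (3*(A + 3)*K))"
  shows "\<exists>N. wf_mlp (K+1) N 1 \<and> num_weights N \<le> 20*K^2 + 5*K*n \<and>
    (\<forall>a x. length a = K \<longrightarrow> (\<forall>i<K. \<bar>a!i\<bar> \<le> A) \<longrightarrow> 0 \<le> x \<longrightarrow> x \<le> 1 \<longrightarrow>
       \<bar>hd (eval_mlp N (a @ [x])) - R_fun a x\<bar> \<le> \<epsilon>)"
proof -
  define \<delta> where "\<delta> = \<epsilon> / (K*(A + 3))"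
  have \<delta>: "0 < \<delta>" "\<delta> \<le> 1" "K * (\<delta> * (A + 3)) = \<epsilon>"
    using mult_mono[of 1 "real K" 1 "A + 3"] K A \<epsilon> by (simp_all add: \<delta>_def)
  have "(4*pi*K)^n / fact n \<le> \<epsilon> / (3*(A + 3)*K)"
    unfolding n_def by (rule power_div_fact_taylor_degree_le) (use \<epsilon> K A in auto)
  also have "\<dots> = \<delta>/3"
    by (simp add: \<delta>_def)
  finally have taylor: "(2 * (2*pi*K))^n / fact n \<le> \<delta>/3"
    by (simp add: mult.assoc[symmetric])
  have "\<And>k. k < K \<Longrightarrow> 0 \<le> 2*pi*real (Suc k) \<and> 2*pi*real (Suc k) \<le> 2*pi*K"
    by simp
  from sine_sum_network[where \<tau> = "\<lambda>k. 2*pi*real (Suc k)", OF K A \<delta>(1,2) this taylor]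
  show ?thesis
    unfolding \<delta>(3) by (auto simp: R_fun_eq_sum)
qed

theorem theorem3:
  fixes A :: real
  assumes "A > 0"
  shows "\<exists>C::real. \<forall>(K::nat) (\<epsilon>::real). 1 \<le> K \<longrightarrow> 0 < \<epsilon> \<longrightarrow> \<epsilon> < 1 \<longrightarrow>
     (\<exists>N::mlp. wf_mlp (K + 1) N 1 \<and>
        real (num_weights N) \<le> C * (real K ^ 2 + real K * (ln (real K / \<epsilon>)) ^ 2) \<and>
        (\<forall>(a::real list) (x::real). length a = K \<longrightarrow> (\<forall>i<K. \<bar>a ! i\<bar> \<le> A) \<longrightarrow>
            0 \<le> x \<longrightarrow> x \<le> 1 \<longrightarrow>
            \<bar>hd (eval_mlp N (a @ [x])) - R_fun a x\<bar> \<le> \<epsilon>))"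
proof -
  define c where "c = 16*pi + 2 + 2 * ln (3*(A + 3))"
  have c: "c \<ge> 0"
    using assms pi_gt_zero by (simp add: c_def add_nonneg_nonneg)
  show ?thesis
  proof (intro exI[of _ "30 + 5*c"] allI impI)
    fix K :: nat and \<epsilon> :: real
    assume K: "1 \<le> K" and \<epsilon>: "0 < \<epsilon>" "\<epsilon> < 1"
    define n where "n = taylor_degree (4*pi*K) (\<epsilon> / (3*(A + 3)*K))"
    have "real n \<le> c * K + 2 * ln (K / \<epsilon>)"
      unfolding n_def c_def by (rule taylor_degree_sine_le[OF K _ \<epsilon>]) (use assms in simp)
    then have "real (20*K^2 + 5*K*n) \<le> (30 + 5*c) * (real K ^ 2 + real K * (ln (K / \<epsilon>))^2)"
      using quadratic_plus_log_bound K c by blast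
    moreover obtain N where "wf_mlp (K+1) N 1" "num_weights N \<le> 20*K^2 + 5*K*n"
      "\<forall>a x. length a = K \<longrightarrow> (\<forall>i<K. \<bar>a!i\<bar> \<le> A) \<longrightarrow> 0 \<le> x \<longrightarrow> x \<le> 1 \<longrightarrow>
         \<bar>hd (eval_mlp N (a @ [x])) - R_fun a x\<bar> \<le> \<epsilon>"
      using R_fun_network[OF K less_imp_le[OF assms] \<epsilon>] unfolding n_def by blast
    ultimately show "\<exists>N. wf_mlp (K + 1) N 1 \<and>
        real (num_weights N) \<le> (30 + 5*c) * (real K ^ 2 + real K * (ln (real K / \<epsilon>))^2) \<and>
        (\<forall>a x. length a = K \<longrightarrow> (\<forall>i<K. \<bar>a ! i\<bar> \<le> A) \<longrightarrow> 0 \<le> x \<longrightarrow> x \<le> 1 \<longrightarrow>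
            \<bar>hd (eval_mlp N (a @ [x])) - R_fun a x\<bar> \<le> \<epsilon>)"
      by (meson of_nat_le_iff order_trans)
  qed
qed

end
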